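(* Consider a two-player two-action game with payoffs $r_i^{jk}$ ($i\in\{1,2\}$, $j,k\in\{1,2\}$) and let $u_i=r_i^{11}+r_i^{22}-r_i^{12}-r_i^{21}$. If $u_1\neq u_2$, then the unconstrained SA-IGA self-play dynamics $\dot x=F(x)$ on $x=(p_1,p_2,w_1,w_2)\in\mathbb{R}^4$ is non-linear, i.e. the vector field $F:\mathbb{R}^4\to\mathbb{R}^4$ is not an affine function of $(p_1,p_2,w_1,w_2)$.
   Context: Two players $i\in\{1,2\}$, each with actions $1,2$; $r_i^{jk}$ is the payoff of player $i$ when player $i$ plays action $j$ and its opponent $-i$ plays action $k$. Player $i$'s mixed strategy is given by $p_i\in[0,1]$, its probability of playing action 1. The expected payoff of player $i$ is $V_i(p_1,p_2)=\sum_{j,k}\pi_i(j)\pi_{-i}(k)r_i^{jk}$ with $\pi_i(1)=p_i,\ \pi_i(2)=1-p_i$. The social payoff is $V^{soc}=\frac{1}{2}(V_1+V_2)$. Each player $i$ has a social attitude $w_i\in[0,1]$ and overall payoff $\tilde V_i=(1-w_i)V_i+w_iV^{soc}$. The unconstrained SA-IGA dynamics (both players using SA-IGA) is the system $\dot p_i=\frac{\partial \tilde V_i}{\partial p_i}$ (partial derivative with respect to the player's own $p_i$, all other variables fixed), $\dot w_i=\varepsilon\,(V_i-V^{soc})$, $i\in\{1,2\}$, where $\varepsilon>0$ is a constant (ratio of learning rates of $w$ and $p$). Write this as $\dot x=F(x)$ with $x=(p_1,p_2,w_1,w_2)$. *)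

theory Defs
  imports "HOL-Analysis.Analysis"
begin

text \<open>Payoffs: r i j k is the payoff of player i (i in {1,2}) when it plays action j
  and its opponent plays action k (j,k in {1,2}).\<close>
type_synonym payoffs = "nat \<Rightarrow> nat \<Rightarrow> nat \<Rightarrow> real"

definition act_prob :: "real \<Rightarrow> nat \<Rightarrow> real" where
  "act_prob p j = (if j = 1 then p else 1 - p)"

definition payoff :: "payoffs \<Rightarrow> nat \<Rightarrow> real \<Rightarrow> real \<Rightarrow> real" where
  "payoff r i q q' = (\<Sum>j\<in>{1,2}. \<Sum>k\<in>{1,2}. act_prob q j * act_prob q' k * r i j k)"

definition V :: "payoffs \<Rightarrow> nat \<Rightarrow> real \<Rightarrow> real \<Rightarrow> real" where
  "V r i p1 p2 = (if i = 1 then payoff r 1 p1 p2 else payoff r 2 p2 p1)"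

definition Vsoc :: "payoffs \<Rightarrow> real \<Rightarrow> real \<Rightarrow> real" where
  "Vsoc r p1 p2 = (V r 1 p1 p2 + V r 2 p1 p2) / 2"

definition Vtilde :: "payoffs \<Rightarrow> nat \<Rightarrow> real \<Rightarrow> real \<Rightarrow> real \<Rightarrow> real" where
  "Vtilde r i w p1 p2 = (1 - w) * V r i p1 p2 + w * Vsoc r p1 p2"

definition u :: "payoffs \<Rightarrow> nat \<Rightarrow> real" where
  "u r i = r i 1 1 + r i 2 2 - r i 1 2 - r i 2 1"

text \<open>Unconstrained SA-IGA vector field on x = (p1,p2,w1,w2) = (x$1,x$2,x$3,x$4).\<close>
definition SAIGA :: "payoffs \<Rightarrow> real \<Rightarrow> real^4 \<Rightarrow> real^4" where
  "SAIGA r \<epsilon> x = (\<chi> n.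
     if n = 1 then deriv (\<lambda>q. Vtilde r 1 (x$3) q (x$2)) (x$1)
     else if n = 2 then deriv (\<lambda>q. Vtilde r 2 (x$4) (x$1) q) (x$2)
     else if n = 3 then \<epsilon> * (V r 1 (x$1) (x$2) - Vsoc r (x$1) (x$2))
     else \<epsilon> * (V r 2 (x$1) (x$2) - Vsoc r (x$1) (x$2)))"

end

theory Submission
  imports Defs
begin

text \<open>The third component of the vector field is \<open>\<epsilon>(V\<^sub>1 - V\<^sub>2)/2\<close>, a bilinear function
  of \<open>(p\<^sub>1, p\<^sub>2)\<close> whose mixed second difference over the unit square is \<open>\<epsilon>(u\<^sub>1 - u\<^sub>2)/2\<close>.
  Every affine map has vanishing second differences, so \<open>u\<^sub>1 \<noteq> u\<^sub>2\<close> rules out affinity.\<close>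

lemma affine_second_difference:
  fixes f :: "'a::real_vector \<Rightarrow> 'b::real_vector"
  assumes "linear f" and "\<And>x. g x = f x + c"
  shows "g (x + a + b) + g x = g (x + a) + g (x + b)"
  using assms by (simp add: linear_add algebra_simps)

lemma payoff_second_difference:
  "payoff r i 1 1 + payoff r i 0 0 - payoff r i 1 0 - payoff r i 0 1 = u r i"
  by (simp add: payoff_def act_prob_def u_def)

lemma SAIGA_social_component:
  "SAIGA r \<epsilon> x $ 3 = \<epsilon> * (V r 1 (x$1) (x$2) - V r 2 (x$1) (x$2)) / 2"
  by (simp add: SAIGA_def Vsoc_def field_simps)

definition strategy_point :: "real \<Rightarrow> real \<Rightarrow> real^4" where
  "strategy_point p\<^sub>1 p\<^sub>2 = (\<chi> n. if n = 1 then p\<^sub>1 else if n = 2 then p\<^sub>2 else 0)"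

lemma strategy_point_add:
  "strategy_point p\<^sub>1 p\<^sub>2 + strategy_point q\<^sub>1 q\<^sub>2 = strategy_point (p\<^sub>1 + q\<^sub>1) (p\<^sub>2 + q\<^sub>2)"
  by (simp add: strategy_point_def vec_eq_iff)

lemma SAIGA_social_component_unit_square:
  "SAIGA r \<epsilon> (strategy_point 1 1) $ 3 + SAIGA r \<epsilon> (strategy_point 0 0) $ 3
     - SAIGA r \<epsilon> (strategy_point 1 0) $ 3 - SAIGA r \<epsilon> (strategy_point 0 1) $ 3
   = \<epsilon> * (u r 1 - u r 2) / 2"
proof -
  have second_difference: "V r i 1 1 + V r i 0 0 - V r i 1 0 - V r i 0 1 = u r i"
    if "i = 1 \<or> i = 2" for i
    using payoff_second_difference[of r i] that by (auto simp: V_def)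
  have "SAIGA r \<epsilon> (strategy_point 1 1) $ 3 + SAIGA r \<epsilon> (strategy_point 0 0) $ 3
     - SAIGA r \<epsilon> (strategy_point 1 0) $ 3 - SAIGA r \<epsilon> (strategy_point 0 1) $ 3
   = \<epsilon> * ((V r 1 1 1 + V r 1 0 0 - V r 1 1 0 - V r 1 0 1)
      - (V r 2 1 1 + V r 2 0 0 - V r 2 1 0 - V r 2 0 1)) / 2"
    by (simp add: SAIGA_social_component strategy_point_def diff_divide_distrib
        add_divide_distrib right_diff_distrib distrib_left)
  also have "\<dots> = \<epsilon> * (u r 1 - u r 2) / 2"
    using second_difference by simp
  finally show ?thesis .
qed

theorem theorem1:
  fixes r :: payoffs and \<epsilon> :: real
  assumes "\<epsilon> > 0" and "u r 1 \<noteq> u r 2"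
  shows "\<not> (\<exists>f c. linear f \<and> (\<forall>x. SAIGA r \<epsilon> x = f x + c))"
proof
  assume "\<exists>f c. linear f \<and> (\<forall>x. SAIGA r \<epsilon> x = f x + c)"
  then obtain f c where "linear f" and "\<And>x. SAIGA r \<epsilon> x = f x + c" by blast
  then have "SAIGA r \<epsilon> (strategy_point 0 0 + strategy_point 1 0 + strategy_point 0 1)
      + SAIGA r \<epsilon> (strategy_point 0 0)
    = SAIGA r \<epsilon> (strategy_point 0 0 + strategy_point 1 0)
      + SAIGA r \<epsilon> (strategy_point 0 0 + strategy_point 0 1)"
    by (rule affine_second_difference)
  then have "SAIGA r \<epsilon> (strategy_point 1 1) $ 3 + SAIGA r \<epsilon> (strategy_point 0 0) $ 3
    = SAIGA r \<epsilon> (strategy_point 1 0) $ 3 + SAIGA r \<epsilon> (strategy_point 0 1) $ 3"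
    by (simp add: strategy_point_add flip: vector_add_component)
  with SAIGA_social_component_unit_square[of r \<epsilon>] have "\<epsilon> * (u r 1 - u r 2) = 0"
    by linarith
  with assms show False by simp
qed

end
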